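(* Let $(\Omega,\mathcal{A})$ be a measurable space, $\Theta:=\mathfrak{P}(\Omega)$ the set of all probability measures on it, and let $H_1,\dots,H_K\subseteq\Theta$ ($K\ge2$) be hypotheses with \textit{e}-variables $E_1,\dots,E_K$, where $E_k$ is an \textit{e}-variable for $H_k$. Let $F$ be a symmetric \textit{e}-merging function. For $\theta\in\Theta$ let $I_\theta:=\{k:\theta\in H_k\}$, $E_\theta:=F(E_k:k\in I_\theta)$, and for $R\subseteq\{1,\dots,K\}$ let $g_R(\theta):=|R\setminus I_\theta|$. For $R\subseteq\{1,\dots,K\}$ and $j\in\{1,2,\dots\}$ let \[ D^R(j):=\min_{I\subseteq\{1,\dots,K\}:\ |R\setminus I|<j}F(E_k:k\in I)\quad(\min\emptyset:=\infty), \] a random variable. Then: (a) pointwise on $\Omega$, $D^R(j)\le \inf_{\theta\in\Theta:\ g_R(\theta)<j}E_\theta$ for all $R$ and $j$, with equality for all $R,j$ if the map $\theta\mapsto I_\theta$ from $\Theta$ to the power set of $\{1,\dots,K\}$ is surjective; (b) for every $\theta\in\Theta$ and every $\alpha>0$, \[ Q_\theta\Bigl(\exists R\subseteq\{1,\dots,K\},\ \exists j\ge1:\ g_R(\theta)<j \text{ and } D^R(j)\ge\alpha\Bigr)\le 1/\alpha . \]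
   Context: An \textit{e}-variable for a hypothesis $H\subseteq\Theta$ is a nonnegative extended random variable $E$ with $\int E\,\mathrm{d}\theta\le 1$ for all $\theta\in H$. An \textit{e}-merging function is a Borel function $F:\bigcup_{n=0}^\infty[0,\infty]^n\to[0,\infty]$, increasing in each argument, mapping any finite sequence of \textit{e}-variables (for a fixed probability measure) to an \textit{e}-variable; $F$ of the empty sequence is $1$. It is symmetric if it does not depend on the order of its arguments. Here $Q_\theta=\theta$. *)

theory Defs
  imports "HOL-Probability.Probability"
begin

definition prob_measures :: "'a measure \<Rightarrow> 'a measure set" where
  "prob_measures M = {P. prob_space P \<and> sets P = sets M}"

definition is_evar :: "'a measure \<Rightarrow> 'a measure set \<Rightarrow> ('a \<Rightarrow> ennreal) \<Rightarrow> bool" where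
  "is_evar M H E \<longleftrightarrow> E \<in> borel_measurable M \<and> (\<forall>\<theta>\<in>H. (\<integral>\<^sup>+ x. E x \<partial>\<theta>) \<le> 1)"

text \<open>e-merging function F on finite sequences in [0,\<infinity>] (lists of ennreal).
  The merging property is tested on probability spaces whose sample space has type 'b.\<close>
definition is_emerging :: "'b itself \<Rightarrow> (ennreal list \<Rightarrow> ennreal) \<Rightarrow> bool" where
  "is_emerging (_::'b itself) F \<longleftrightarrow>
     F [] = 1
   \<and> (\<forall>xs ys. list_all2 (\<le>) xs ys \<longrightarrow> F xs \<le> F ys)
   \<and> (\<forall>n. (\<lambda>x. F (map x [0..<n])) \<in> borel_measurable (PiM {..<n} (\<lambda>_. borel)))
   \<and> (\<forall>(P::'b measure) (Es::nat \<Rightarrow> 'b \<Rightarrow> ennreal) n.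
        prob_space P \<longrightarrow>
        (\<forall>i<n. is_evar P {P} (Es i)) \<longrightarrow>
        is_evar P {P} (\<lambda>\<omega>. F (map (\<lambda>i. Es i \<omega>) [0..<n])))"

definition symmetric_fn :: "('c list \<Rightarrow> 'd) \<Rightarrow> bool" where
  "symmetric_fn F \<longleftrightarrow> (\<forall>xs ys. mset xs = mset ys \<longrightarrow> F xs = F ys)"

definition Fset :: "(ennreal list \<Rightarrow> ennreal) \<Rightarrow> (nat \<Rightarrow> 'a \<Rightarrow> ennreal) \<Rightarrow> nat set \<Rightarrow> 'a \<Rightarrow> ennreal" where
  "Fset F E I \<omega> = F (map (\<lambda>k. E k \<omega>) (sorted_list_of_set I))"

definition Ith :: "nat \<Rightarrow> (nat \<Rightarrow> 'a measure set) \<Rightarrow> 'a measure \<Rightarrow> nat set" where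
  "Ith K H \<theta> = {k \<in> {1..K}. \<theta> \<in> H k}"

definition gR :: "nat \<Rightarrow> (nat \<Rightarrow> 'a measure set) \<Rightarrow> nat set \<Rightarrow> 'a measure \<Rightarrow> nat" where
  "gR K H R \<theta> = card (R - Ith K H \<theta>)"

text \<open>D^R(j), minimum over I subset {1..K} with |R \ I| < j; the empty infimum is \<infinity>.\<close>
definition DR :: "(ennreal list \<Rightarrow> ennreal) \<Rightarrow> (nat \<Rightarrow> 'a \<Rightarrow> ennreal) \<Rightarrow> nat \<Rightarrow> nat set \<Rightarrow> nat \<Rightarrow> 'a \<Rightarrow> ennreal" where
  "DR F E K R j \<omega> = (INF I \<in> {I. I \<subseteq> {1..K} \<and> card (R - I) < j}. Fset F E I \<omega>)"

end

theory Submission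
  imports Defs
begin

text \<open>
  Part (a) is order theory: every \<open>\<theta>\<close> with \<open>g\<^sub>R(\<theta>) < j\<close> contributes its own index set
  \<open>I\<^sub>\<theta>\<close> to the minimum defining \<open>D\<^sup>R(j)\<close>, and under surjectivity every admissible \<open>I\<close> arises
  this way. For part (b), fix \<open>\<theta>\<close>: whenever \<open>g\<^sub>R(\<theta>) < j\<close> we get \<open>D\<^sup>R(j) \<le> E\<^sub>\<theta>\<close>, so the event
  in question lies inside \<open>{E\<^sub>\<theta> \<ge> \<alpha>}\<close>. Since \<open>E\<^sub>\<theta>\<close> merges e-variables that are all valid
  under \<open>\<theta>\<close>, it is itself an e-variable for \<open>{\<theta>}\<close>, and Markov's inequality finishes.
\<close>

lemma is_evar_Markov:
  assumes "is_evar P {P} E" and "\<alpha> > 0"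
  shows "emeasure P {x\<in>space P. ennreal \<alpha> \<le> E x} \<le> ennreal (1 / \<alpha>)"
proof -
  let ?S = "{x\<in>space P. ennreal \<alpha> \<le> E x}"
  have [measurable]: "E \<in> borel_measurable P" and int: "(\<integral>\<^sup>+ x. E x \<partial>P) \<le> 1"
    using assms(1) by (auto simp: is_evar_def)
  have S: "?S \<in> sets P" by measurable
  have "ennreal \<alpha> * emeasure P ?S = (\<integral>\<^sup>+ x. ennreal \<alpha> * indicator ?S x \<partial>P)"
    using S by (simp add: nn_integral_cmult_indicator)
  also have "\<dots> \<le> (\<integral>\<^sup>+ x. E x \<partial>P)"
    by (intro nn_integral_mono) (auto split: split_indicator)
  finally have bound: "ennreal \<alpha> * emeasure P ?S \<le> 1" using int by simp
  have "emeasure P ?S = ennreal (1 / \<alpha>) * (ennreal \<alpha> * emeasure P ?S)"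
    using assms(2) by (simp add: mult.assoc[symmetric] ennreal_mult''[symmetric])
  also have "\<dots> \<le> ennreal (1 / \<alpha>)"
    using mult_left_mono[OF bound, of "ennreal (1 / \<alpha>)"] by simp
  finally show ?thesis .
qed

lemma is_evar_restrict:
  assumes "is_evar M H E" and "\<theta> \<in> H" and "sets \<theta> = sets M"
  shows "is_evar \<theta> {\<theta>} E"
  using assms measurable_cong_sets[OF assms(3) refl] by (auto simp: is_evar_def)

lemma is_emerging_evar:
  assumes "is_emerging TYPE('a) F" and "prob_space (P :: 'a measure)"
    and "\<And>i. i < n \<Longrightarrow> is_evar P {P} (Es i)"
  shows "is_evar P {P} (\<lambda>\<omega>. F (map (\<lambda>i. Es i \<omega>) [0..<n]))"
  using assms unfolding is_emerging_def by blast

lemma is_emerging_Fset: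
  assumes "is_emerging TYPE('a) F" and "prob_space (P :: 'a measure)" and "finite I"
    and "\<And>k. k \<in> I \<Longrightarrow> is_evar P {P} (E k)"
  shows "is_evar P {P} (Fset F E I)"
proof -
  define L where "L = sorted_list_of_set I"
  have set_L: "set L = I" using assms(3) by (simp add: L_def)
  have "is_evar P {P} (\<lambda>\<omega>. F (map (\<lambda>i. E (L ! i) \<omega>) [0..<length L]))"
  proof (rule is_emerging_evar[OF assms(1,2), where n = "length L" and Es = "\<lambda>i. E (L ! i)"])
    fix i assume "i < length L"
    then have "L ! i \<in> I" using set_L by auto
    then show "is_evar P {P} (E (L ! i))" by (rule assms(4))
  qed
  moreover have "map (\<lambda>i. E (L ! i) \<omega>) [0..<length L] = map (\<lambda>k. E k \<omega>) L" for \<omega>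
  proof -
    have "map (\<lambda>k. E k \<omega>) L = map (\<lambda>k. E k \<omega>) (map ((!) L) [0..<length L])"
      by (simp only: map_nth)
    then show ?thesis by (simp only: map_map comp_def)
  qed
  ultimately show ?thesis unfolding Fset_def L_def[symmetric] by simp
qed

lemma Ith_subset: "Ith K H \<theta> \<subseteq> {1..K}"
  by (auto simp: Ith_def)

lemma DR_le_Fset_Ith:
  assumes "gR K H R \<theta> < j"
  shows "DR F E K R j \<omega> \<le> Fset F E (Ith K H \<theta>) \<omega>"
  unfolding DR_def using assms Ith_subset by (intro INF_lower) (auto simp: gR_def)

lemma DR_le_INF:
  "DR F E K R j \<omega> \<le> (INF \<theta>\<in>{\<theta>\<in>\<Theta>. gR K H R \<theta> < j}. Fset F E (Ith K H \<theta>) \<omega>)"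
  by (rule INF_greatest) (auto intro: DR_le_Fset_Ith)

lemma DR_eq_INF_if_surj:
  assumes surj: "\<And>I. I \<subseteq> {1..K} \<Longrightarrow> \<exists>\<theta>\<in>\<Theta>. Ith K H \<theta> = I"
  shows "DR F E K R j \<omega> = (INF \<theta>\<in>{\<theta>\<in>\<Theta>. gR K H R \<theta> < j}. Fset F E (Ith K H \<theta>) \<omega>)"
proof (rule antisym[OF DR_le_INF])
  show "(INF \<theta>\<in>{\<theta>\<in>\<Theta>. gR K H R \<theta> < j}. Fset F E (Ith K H \<theta>) \<omega>) \<le> DR F E K R j \<omega>"
    unfolding DR_def
  proof (rule INF_greatest)
    fix I assume "I \<in> {I. I \<subseteq> {1..K} \<and> card (R - I) < j}"
    then obtain \<theta> where "\<theta> \<in> \<Theta>" "Ith K H \<theta> = I" "card (R - I) < j"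
      using surj by blast
    then show "(INF \<theta>\<in>{\<theta>\<in>\<Theta>. gR K H R \<theta> < j}. Fset F E (Ith K H \<theta>) \<omega>) \<le> Fset F E I \<omega>"
      by (intro INF_lower2[of \<theta>]) (auto simp: gR_def)
  qed
qed

lemma Fset_Ith_is_evar:
  fixes M :: "'a measure"
  assumes "\<theta> \<in> prob_measures M"
    and "\<And>k. k \<in> {1..K} \<Longrightarrow> is_evar M (H k) (E k)"
    and "is_emerging TYPE('a) F"
  shows "is_evar \<theta> {\<theta>} (Fset F E (Ith K H \<theta>))"
proof (rule is_emerging_Fset[OF assms(3)])
  show "prob_space \<theta>" using assms(1) by (simp add: prob_measures_def)
  show "finite (Ith K H \<theta>)" using Ith_subset by (rule finite_subset) simp
  fix k assume k: "k \<in> Ith K H \<theta>"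
  show "is_evar \<theta> {\<theta>} (E k)"
  proof (rule is_evar_restrict)
    show "is_evar M (H k) (E k)" "\<theta> \<in> H k" using k assms(2) by (auto simp: Ith_def)
    show "sets \<theta> = sets M" using assms(1) by (simp add: prob_measures_def)
  qed
qed

lemma DR_exceedance_bound:
  fixes M :: "'a measure"
  assumes "\<theta> \<in> prob_measures M" and "\<alpha> > 0"
    and "\<And>k. k \<in> {1..K} \<Longrightarrow> is_evar M (H k) (E k)"
    and "is_emerging TYPE('a) F"
  shows "emeasure \<theta> {\<omega>\<in>space M. \<exists>R. R \<subseteq> {1..K} \<and> (\<exists>j::nat. j \<ge> 1 \<and>
           gR K H R \<theta> < j \<and> DR F E K R j \<omega> \<ge> ennreal \<alpha>)} \<le> ennreal (1 / \<alpha>)"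
    (is "emeasure \<theta> ?A \<le> _")
proof -
  let ?E\<theta> = "Fset F E (Ith K H \<theta>)"
  have evar: "is_evar \<theta> {\<theta>} ?E\<theta>" by (rule Fset_Ith_is_evar[OF assms(1,3,4)])
  then have [measurable]: "?E\<theta> \<in> borel_measurable \<theta>" by (simp add: is_evar_def)
  have space_eq: "space \<theta> = space M"
    using assms(1) by (intro sets_eq_imp_space_eq) (simp add: prob_measures_def)
  have "?A \<subseteq> {x\<in>space \<theta>. ennreal \<alpha> \<le> ?E\<theta> x}"
  proof
    fix x assume "x \<in> ?A"
    then obtain R j where x: "x \<in> space M" and g: "gR K H R \<theta> < j"
      and D: "ennreal \<alpha> \<le> DR F E K R j x"
      by blast
    have "ennreal \<alpha> \<le> ?E\<theta> x" using D DR_le_Fset_Ith[OF g] by (rule order.trans)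
    with x space_eq show "x \<in> {x\<in>space \<theta>. ennreal \<alpha> \<le> ?E\<theta> x}" by simp
  qed
  moreover have "{x\<in>space \<theta>. ennreal \<alpha> \<le> ?E\<theta> x} \<in> sets \<theta>"
    by (rule borel_measurable_le) simp_all
  ultimately have "emeasure \<theta> ?A \<le> emeasure \<theta> {x\<in>space \<theta>. ennreal \<alpha> \<le> ?E\<theta> x}"
    by (rule emeasure_mono)
  also have "\<dots> \<le> ennreal (1 / \<alpha>)" using is_evar_Markov[OF evar assms(2)] .
  finally show ?thesis .
qed

theorem mainTheorem2:
  fixes M :: "'a measure" and K :: nat
    and H :: "nat \<Rightarrow> 'a measure set" and E :: "nat \<Rightarrow> 'a \<Rightarrow> ennreal"
    and F :: "ennreal list \<Rightarrow> ennreal"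
  assumes K2: "K \<ge> 2"
    and H_sub: "\<forall>k\<in>{1..K}. H k \<subseteq> prob_measures M"
    and E_evar: "\<forall>k\<in>{1..K}. is_evar M (H k) (E k)"
    and F_merge: "is_emerging TYPE('a) F"
    and F_sym: "symmetric_fn F"
  shows "(\<forall>\<omega>\<in>space M. \<forall>R. R \<subseteq> {1..K} \<longrightarrow> (\<forall>j::nat. j \<ge> 1 \<longrightarrow>
            DR F E K R j \<omega> \<le> (INF \<theta>\<in>{\<theta>\<in>prob_measures M. gR K H R \<theta> < j}. Fset F E (Ith K H \<theta>) \<omega>)))
       \<and> ((\<forall>I. I \<subseteq> {1..K} \<longrightarrow> (\<exists>\<theta>\<in>prob_measures M. Ith K H \<theta> = I)) \<longrightarrow>
          (\<forall>\<omega>\<in>space M. \<forall>R. R \<subseteq> {1..K} \<longrightarrow> (\<forall>j::nat. j \<ge> 1 \<longrightarrow>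
            DR F E K R j \<omega> = (INF \<theta>\<in>{\<theta>\<in>prob_measures M. gR K H R \<theta> < j}. Fset F E (Ith K H \<theta>) \<omega>))))
       \<and> (\<forall>\<theta>\<in>prob_measures M. \<forall>\<alpha>::real. \<alpha> > 0 \<longrightarrow>
            emeasure \<theta> {\<omega>\<in>space M. \<exists>R. R \<subseteq> {1..K} \<and> (\<exists>j::nat. j \<ge> 1 \<and>
               gR K H R \<theta> < j \<and> DR F E K R j \<omega> \<ge> ennreal \<alpha>)} \<le> ennreal (1 / \<alpha>))"
proof (intro conjI impI ballI allI)
  show "DR F E K R j \<omega> \<le> (INF \<theta>\<in>{\<theta>\<in>prob_measures M. gR K H R \<theta> < j}. Fset F E (Ith K H \<theta>) \<omega>)"
    for \<omega> R j by (rule DR_le_INF)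
  show "DR F E K R j \<omega> = (INF \<theta>\<in>{\<theta>\<in>prob_measures M. gR K H R \<theta> < j}. Fset F E (Ith K H \<theta>) \<omega>)"
    if "\<forall>I. I \<subseteq> {1..K} \<longrightarrow> (\<exists>\<theta>\<in>prob_measures M. Ith K H \<theta> = I)" for \<omega> R j
    using that by (intro DR_eq_INF_if_surj) blast
  show "emeasure \<theta> {\<omega>\<in>space M. \<exists>R. R \<subseteq> {1..K} \<and> (\<exists>j::nat. j \<ge> 1 \<and>
          gR K H R \<theta> < j \<and> DR F E K R j \<omega> \<ge> ennreal \<alpha>)} \<le> ennreal (1 / \<alpha>)"
    if "\<theta> \<in> prob_measures M" "\<alpha> > 0" for \<theta> and \<alpha> :: real
    using that E_evar F_merge by (intro DR_exceedance_bound) auto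
qed
end
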